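(* Let $4 \le p \le n-1$ and let $(i,j)\in A$. The nonnegativity constraint $x_{ij}\ge 0$ is valid for $P^p_{0,n}(D)$ and defines a facet of $P^p_{0,n}(D)$.
   Context: Let $n$ be a positive integer, $V=\{0,1,\dots,n\}$, and let $D=(V,A)$ be the digraph whose arc set $A$ consists of all ordered pairs $(i,j)$ with $i\neq j$, $i,j\in V$, except that no arc enters node $0$, no arc leaves node $n$, and the arc $(0,n)$ is absent. Nodes $1,\dots,n-1$ are called internal nodes. A $(0,n)$-$p$-path is a simple directed path in $D$ from $0$ to $n$ with exactly $p$ arcs (all nodes distinct). $P^p_{0,n}(D)\subseteq\mathbb{R}^A$ denotes the convex hull of the incidence vectors of all $(0,n)$-$p$-paths in $D$. An inequality is facet defining if it is valid for the polytope and the face it defines has dimension one less than the polytope. *)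

theory Defs
  imports "HOL-Analysis.Analysis"
begin

text \<open>Nodes form a finite type 'v with n+1 elements; s plays the role of node 0
  and t of node n. Arc vectors live in real^('v \<times> 'v); coordinates of non-arcs
  are identically 0 on all incidence vectors.\<close>

definition arcs :: "'v \<Rightarrow> 'v \<Rightarrow> ('v \<times> 'v) set" where
  "arcs s t = {(i, j). i \<noteq> j \<and> j \<noteq> s \<and> i \<noteq> t \<and> (i, j) \<noteq> (s, t)}"

definition is_p_path :: "'v \<Rightarrow> 'v \<Rightarrow> nat \<Rightarrow> 'v list \<Rightarrow> bool" where
  "is_p_path s t p vs \<longleftrightarrow> length vs = p + 1 \<and> distinct vs \<and> hd vs = s \<and> last vs = t
     \<and> (\<forall>k < p. (vs ! k, vs ! Suc k) \<in> arcs s t)"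

definition path_arcs :: "'v list \<Rightarrow> ('v \<times> 'v) set" where
  "path_arcs vs = set (zip vs (tl vs))"

definition incidence :: "'v::finite list \<Rightarrow> real ^ ('v \<times> 'v)" where
  "incidence vs = (\<chi> a. if a \<in> path_arcs vs then 1 else 0)"

definition path_polytope :: "'v::finite \<Rightarrow> 'v \<Rightarrow> nat \<Rightarrow> (real ^ ('v \<times> 'v)) set" where
  "path_polytope s t p = convex hull (incidence ` {vs. is_p_path s t p vs})"

end

theory Submission
  imports Defs
begin

(* Evaluated at an incidence vector, a linear functional a \<bullet> x is the path weight of a.
  The face x_ij = 0 contains all paths avoiding (i, j) and misses those through (i, j), so it
  is a facet once every weight that is constant (= d) on avoiding paths is also constant on
  paths through (i, j). Replacing an inner vertex u of an avoiding path by an unused vertex w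
  gives another avoiding path, whence c(a,u) + c(u,b) = c(a,w) + c(w,b). Chaining such
  exchanges, for which the p + 2 vertices leave just enough room, shows that for j \<noteq> t
  every path through (i, j) weighs d + c(i,j) + c(j,t) - c(i,w) - c(w,t), independently of
  the vertex w outside {s,t,i,j}; the case j = t follows by reversing all paths. *)

definition path_weight :: "('v \<times> 'v \<Rightarrow> real) \<Rightarrow> 'v list \<Rightarrow> real" where
  "path_weight c vs = sum_list (map c (zip vs (tl vs)))"

lemma path_weight_Nil [simp]: "path_weight c [] = 0"
  and path_weight_single [simp]: "path_weight c [a] = 0"
  and path_weight_Cons_Cons [simp]: "path_weight c (a # b # vs) = c (a, b) + path_weight c (b # vs)"
  by (simp_all add: path_weight_def)

lemma path_weight_append_Cons:
  "path_weight c (xs @ a # ys) = path_weight c (xs @ [a]) + path_weight c (a # ys)"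
  by (induction xs rule: induct_list012) auto

lemma path_weight_rev: "path_weight (c \<circ> prod.swap) (rev vs) = path_weight c vs"
proof (induction vs rule: induct_list012)
  case (3 x y zs)
  have "path_weight (c \<circ> prod.swap) (rev (x # y # zs))
      = path_weight (c \<circ> prod.swap) (rev (y # zs)) + c (x, y)"
    using path_weight_append_Cons[of _ "rev zs" y "[x]"] by simp
  then show ?case using 3(2) by (simp add: o_def)
qed simp_all

lemma path_arcs_Nil [simp]: "path_arcs [] = {}"
  and path_arcs_single [simp]: "path_arcs [a] = {}"
  and path_arcs_Cons_Cons [simp]: "path_arcs (a # b # vs) = insert (a, b) (path_arcs (b # vs))"
  by (simp_all add: path_arcs_def)

lemma path_arcs_append_Cons:
  "path_arcs (xs @ a # ys) = path_arcs (xs @ [a]) \<union> path_arcs (a # ys)"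
  by (induction xs rule: induct_list012) auto

lemma path_arcs_split_three:
  "path_arcs (xs @ a # u # b # ys) = path_arcs (xs @ [a]) \<union> {(a, u), (u, b)} \<union> path_arcs (b # ys)"
  using path_arcs_append_Cons[of xs a "u # b # ys"] by auto

text \<open>\<open>path_arcs_append_Cons\<close> would loop as a simp rule; this instance does not.\<close>

lemma path_arcs_Cons_append_Cons_Cons [simp]:
  "path_arcs (x # xs @ a # b # ys) = path_arcs (x # xs @ [a]) \<union> insert (a, b) (path_arcs (b # ys))"
  using path_arcs_append_Cons[of "x # xs" a "b # ys"] by simp

lemma path_arcs_memD: "(a, b) \<in> path_arcs vs \<Longrightarrow> a \<in> set (butlast vs) \<and> b \<in> set (tl vs)"
  by (induction vs rule: induct_list012) auto

lemma path_arcs_memE: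
  assumes "(a, b) \<in> path_arcs vs"
  obtains xs ys where "vs = xs @ a # b # ys"
proof -
  have "\<exists>xs ys. vs = xs @ a # b # ys"
    using assms
  proof (induction vs rule: induct_list012)
    case (3 x y zs)
    show ?case
    proof (cases "(a, b) = (x, y)")
      case True
      then show ?thesis by (intro exI[of _ "[]"] exI[of _ zs]) simp
    next
      case False
      then obtain xs ys where "y # zs = xs @ a # b # ys" using 3 by auto
      then show ?thesis by (intro exI[of _ "x # xs"] exI[of _ ys]) simp
    qed
  qed simp_all
  then show ?thesis using that by blast
qed

lemma path_arcs_rev: "path_arcs (rev vs) = prod.swap ` path_arcs vs"
proof (induction vs rule: induct_list012)
  case (3 x y zs)
  have "path_arcs (rev (x # y # zs)) = path_arcs (rev (y # zs)) \<union> {(y, x)}"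
    using path_arcs_append_Cons[of "rev zs" y "[x]"] by simp
  then show ?case using 3(2) by simp
qed simp_all

lemma arcs_swap_iff: "(b, a) \<in> arcs t s \<longleftrightarrow> (a, b) \<in> arcs s t"
  by (auto simp: arcs_def)

lemma is_p_path_iff:
  assumes "s \<noteq> t" "2 \<le> p"
  shows "is_p_path s t p vs \<longleftrightarrow> length vs = p + 1 \<and> distinct vs \<and> hd vs = s \<and> last vs = t"
proof -
  have "(vs ! k, vs ! Suc k) \<in> arcs s t"
    if vs: "length vs = p + 1" "distinct vs" "hd vs = s" "last vs = t" and "k < p" for k
  proof -
    have "vs \<noteq> []" using vs by auto
    then have first: "vs ! 0 = s" and final: "vs ! p = t"
      using vs by (auto simp: hd_conv_nth last_conv_nth)
    have eq_iff: "vs ! a = vs ! b \<longleftrightarrow> a = b" if "a \<le> p" "b \<le> p" for a b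
      using vs that by (simp add: nth_eq_iff_index_eq)
    show ?thesis
      using eq_iff[of k "Suc k"] eq_iff[of "Suc k" 0] eq_iff[of k p] eq_iff[of k 0] eq_iff[of "Suc k" p]
        first final \<open>k < p\<close> assms(2) by (auto simp: arcs_def)
  qed
  then show ?thesis by (auto simp: is_p_path_def)
qed

lemma is_p_path_rev:
  assumes "s \<noteq> t" "2 \<le> p"
  shows "is_p_path t s p (rev vs) \<longleftrightarrow> is_p_path s t p vs"
proof -
  have "vs \<noteq> []" if "length vs = p + 1" using that by auto
  then show ?thesis using assms by (auto simp: is_p_path_iff hd_rev last_rev)
qed

lemma obtain_fresh_list:
  fixes E :: "'v::finite list"
  assumes "length E + m \<le> CARD('v)"
  obtains F where "length F = m" "distinct F" "set F \<inter> set E = {}"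
proof -
  have "m \<le> card (UNIV - set E)"
    using assms card_length[of E] by (simp add: card_Diff_subset)
  then obtain T where "T \<subseteq> UNIV - set E" "card T = m"
    by (meson obtain_subset_with_card_n)
  moreover obtain F where "set F = T" "distinct F"
    by (meson finite finite_distinct_list)
  ultimately show ?thesis using that distinct_card[of F] by auto
qed

lemma mem_affine_hull_if_hyperplanes:
  fixes S :: "'a::euclidean_space set"
  assumes "\<And>a b. S \<subseteq> {x. a \<bullet> x = b} \<Longrightarrow> a \<bullet> z = b"
  shows "z \<in> affine hull S"
proof -
  obtain \<F> where hull: "affine hull S = \<Inter>\<F>"
    and hyperplane: "\<And>h. h \<in> \<F> \<Longrightarrow> \<exists>a b. a \<noteq> 0 \<and> h = {x. a \<bullet> x = b}"
    using affine_hull_finite_intersection_hyperplanes by metis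
  have "z \<in> h" if "h \<in> \<F>" for h
  proof -
    obtain a b where h: "h = {x. a \<bullet> x = b}" using hyperplane[OF \<open>h \<in> \<F>\<close>] by blast
    have "S \<subseteq> h" using hull hull_subset[of S affine] that by blast
    then show ?thesis using assms h by blast
  qed
  then show ?thesis using hull by blast
qed

lemma aff_dim_Int_affine_eq_minus_one:
  fixes P X H :: "'a::euclidean_space set"
  assumes "affine H" "X \<subseteq> P \<inter> H" "y \<in> P" "y \<notin> H" "P \<subseteq> affine hull (insert y X)"
  shows "aff_dim (P \<inter> H) = aff_dim P - 1"
proof -
  have "affine hull (P \<inter> H) \<subseteq> H" using assms(1) by (simp add: hull_minimal)
  then have "affine hull (P \<inter> H) \<subset> affine hull P"
    using assms(3,4) hull_mono[of "P \<inter> H" P] hull_inc[of y P] by blast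
  then have "aff_dim (P \<inter> H) < aff_dim P" by (rule aff_dim_psubset)
  moreover have "aff_dim P \<le> aff_dim (P \<inter> H) + 1"
  proof -
    have "aff_dim P \<le> aff_dim (insert y X)"
      using aff_dim_subset[OF assms(5)] by simp
    also have "\<dots> \<le> aff_dim X + 1" by (simp add: aff_dim_insert)
    also have "\<dots> \<le> aff_dim (P \<inter> H) + 1" using aff_dim_subset[OF assms(2)] by simp
    finally show ?thesis .
  qed
  ultimately show ?thesis by linarith
qed

lemma incidence_nth: "incidence vs $ a = (if a \<in> path_arcs vs then 1 else 0)"
  by (simp add: incidence_def)

lemma inner_incidence:
  fixes c :: "real ^ ('v::finite \<times> 'v)"
  assumes "distinct vs"
  shows "c \<bullet> incidence vs = path_weight (($) c) vs"
proof -
  have "c \<bullet> incidence vs = (\<Sum>a\<in>UNIV. if a \<in> path_arcs vs then c $ a else 0)"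
    by (simp add: inner_vec_def incidence_nth if_distrib cong: if_cong)
  also have "\<dots> = (\<Sum>a\<in>set (zip vs (tl vs)). c $ a)"
    by (simp add: sum.If_cases path_arcs_def)
  also have "\<dots> = path_weight (($) c) vs"
    using sum.distinct_set_conv_list[OF distinct_zipI1[OF assms]] by (simp add: path_weight_def)
  finally show ?thesis .
qed

lemma path_polytope_nonneg:
  fixes s t :: "'v::finite"
  assumes "x \<in> path_polytope s t p"
  shows "0 \<le> x $ a"
proof -
  have "convex {x :: real ^ ('v \<times> 'v). 0 \<le> x $ a}" by (simp add: convex_def)
  moreover have "incidence ` {vs. is_p_path s t p vs} \<subseteq> {x. 0 \<le> x $ a}"
    by (auto simp: incidence_nth)
  ultimately show ?thesis using assms hull_minimal unfolding path_polytope_def by blast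
qed

locale constant_on_avoiding_paths =
  fixes s t :: "'v::finite" and p :: nat and i j :: 'v
    and c :: "'v \<times> 'v \<Rightarrow> real" and d :: real
  assumes s_ne_t: "s \<noteq> t" and four_le_p: "4 \<le> p" and p_le_card: "p + 2 \<le> CARD('v)"
    and arc_ij: "(i, j) \<in> arcs s t"
    and weight_avoiding: "\<And>R. is_p_path s t p R \<Longrightarrow> (i, j) \<notin> path_arcs R \<Longrightarrow> path_weight c R = d"
begin

lemma arc_ij_facts: "i \<noteq> j" "j \<noteq> s" "i \<noteq> t" "i = s \<Longrightarrow> j \<noteq> t"
  using arc_ij by (auto simp: arcs_def)

lemma fresh_vertices:
  fixes E :: "'v list"
  assumes "length E + m \<le> p + 2"
  obtains F where "length F = m" "distinct F" "set F \<inter> set E = {}"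
proof -
  have "length E + m \<le> CARD('v)" using assms p_le_card by linarith
  then show ?thesis using that obtain_fresh_list by blast
qed

lemma fresh_vertex:
  fixes E :: "'v list"
  assumes "length E \<le> p + 1"
  obtains x where "x \<notin> set E"
proof -
  obtain F where "length F = 1" "set F \<inter> set E = {}"
    by (rule fresh_vertices[of E 1]) (use assms in simp)
  then show ?thesis using that by (auto simp: length_Suc_conv)
qed

lemma weight_replace_vertex:
  assumes "length (xs @ a # u # b # ys) = p + 1" "distinct (xs @ a # u # b # ys)"
    and "hd (xs @ [a]) = s" "last (b # ys) = t" "w \<notin> set (xs @ a # u # b # ys)"
    and "(i, j) \<notin> path_arcs (xs @ [a]) \<union> {(a, w), (w, b)} \<union> path_arcs (b # ys)"
  shows "path_weight c (xs @ a # u # b # ys) = d + c (a, u) + c (u, b) - c (a, w) - c (w, b)"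
proof -
  let ?R = "xs @ a # w # b # ys"
  have "is_p_path s t p ?R"
    using assms(1-5) s_ne_t four_le_p by (auto simp: is_p_path_iff hd_append)
  then have "path_weight c ?R = d"
    using weight_avoiding assms(6) by (simp add: path_arcs_split_three)
  then show ?thesis
    using path_weight_append_Cons[of c xs a "u # b # ys"] path_weight_append_Cons[of c xs a "w # b # ys"]
    by simp
qed

lemma exchange_vertex:
  assumes "length (xs @ a # u # b # ys) = p + 1" "distinct (xs @ a # u # b # ys)"
    and "hd (xs @ [a]) = s" "last (b # ys) = t" "(i, j) \<notin> path_arcs (xs @ a # u # b # ys)"
    and "w \<notin> set (xs @ a # u # b # ys)" "(a, w) \<noteq> (i, j)" "(w, b) \<noteq> (i, j)"
  shows "c (a, u) + c (u, b) = c (a, w) + c (w, b)"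
proof -
  have "is_p_path s t p (xs @ a # u # b # ys)"
    using assms(1-4) s_ne_t four_le_p by (auto simp: is_p_path_iff hd_append)
  then have "path_weight c (xs @ a # u # b # ys) = d" using weight_avoiding assms(5) by simp
  moreover have "path_weight c (xs @ a # u # b # ys) = d + c (a, u) + c (u, b) - c (a, w) - c (w, b)"
    using assms by (intro weight_replace_vertex) (auto simp: path_arcs_split_three)
  ultimately show ?thesis by simp
qed

lemma exchange_before_target:
  assumes "j \<noteq> t" "w \<notin> {s, t, i, j}" "x \<notin> {s, t, i, j, w}"
  shows "c (x, j) + c (j, t) = c (x, w) + c (w, t)"
proof -
  obtain F where F: "length F = p - 3" "distinct F" "set F \<inter> set [s, t, x, j, w] = {}"
    by (rule fresh_vertices[of "[s, t, x, j, w]" "p - 3"]) (use four_le_p in simp)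
  show ?thesis
    by (rule exchange_vertex[of "s # F" x j t "[]" w])
      (use F assms s_ne_t four_le_p arc_ij_facts in \<open>auto dest!: path_arcs_memD\<close>)
qed

lemma exchange_after_source:
  assumes "i \<noteq> s" "j \<noteq> t" "w \<notin> {s, t, i, j}" "b \<notin> {s, t, i, j, w}"
  shows "c (s, j) + c (j, b) = c (s, w) + c (w, b)"
proof -
  obtain F where F: "length F = p - 3" "distinct F" "set F \<inter> set [s, t, j, b, w] = {}"
    by (rule fresh_vertices[of "[s, t, j, b, w]" "p - 3"]) (use four_le_p in simp)
  show ?thesis
    by (rule exchange_vertex[of "[]" s j b "F @ [t]" w])
      (use F assms s_ne_t four_le_p arc_ij_facts in \<open>auto dest!: path_arcs_memD\<close>)
qed

text \<open>Only one vertex \<open>x\<close> outside \<open>{s, t, i, j, w}\<close> is guaranteed to exist,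
  so the exchange of \<open>j\<close> and \<open>w\<close> is carried from the end of a path (before \<open>t\<close>)
  to its start (after \<open>s\<close>) through the exchanges before \<open>i\<close>.\<close>

lemma target_diff_eq_source_diff:
  assumes "i \<noteq> s" "j \<noteq> t" "w \<notin> {s, t, i, j}"
  shows "c (j, t) - c (w, t) = c (s, w) - c (s, j)"
proof -
  note facts = assms s_ne_t four_le_p arc_ij_facts
  obtain x where x: "x \<notin> set [s, t, i, j, w]"
    by (rule fresh_vertex[of "[s, t, i, j, w]"]) (use four_le_p in simp)
  have "c (x, j) + c (j, t) = c (x, w) + c (w, t)"
    by (rule exchange_before_target) (use x facts in auto)
  moreover have "c (x, w) + c (w, i) = c (x, j) + c (j, i)"
  proof -
    obtain F where F: "length F = p - 4" "distinct F" "set F \<inter> set [s, t, x, w, i, j] = {}"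
      by (rule fresh_vertices[of "[s, t, x, w, i, j]" "p - 4"]) (use four_le_p in simp)
    show ?thesis
      by (rule exchange_vertex[of "[s]" x w i "F @ [t]" j])
        (use F x facts in \<open>auto dest!: path_arcs_memD\<close>)
  qed
  moreover have "c (s, w) + c (w, i) = c (s, j) + c (j, i)"
  proof -
    obtain F where F: "length F = p - 3" "distinct F" "set F \<inter> set [s, t, w, i, j] = {}"
      by (rule fresh_vertices[of "[s, t, w, i, j]" "p - 3"]) (use four_le_p in simp)
    show ?thesis
      by (rule exchange_vertex[of "[]" s w i "F @ [t]" j])
        (use F facts in \<open>auto dest!: path_arcs_memD\<close>)
  qed
  ultimately show ?thesis by linarith
qed

lemma successor_diff_eq_target_diff:
  assumes "j \<noteq> t" "w \<notin> {s, t, i, j}" "b \<notin> {s, i, j, w}"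
  shows "c (j, b) - c (w, b) = c (j, t) - c (w, t)"
proof (cases "b = t")
  case b_ne_t: False
  note facts = assms b_ne_t s_ne_t four_le_p arc_ij_facts
  show ?thesis
  proof (cases "i = s")
    case True
    obtain x where x: "x \<notin> set [s, t, j, w, b]"
      by (rule fresh_vertex[of "[s, t, j, w, b]"]) (use four_le_p in simp)
    obtain F where F: "length F = p - 4" "distinct F" "set F \<inter> set [s, t, x, j, b, w] = {}"
      by (rule fresh_vertices[of "[s, t, x, j, b, w]" "p - 4"]) (use four_le_p in simp)
    have "c (x, j) + c (j, b) = c (x, w) + c (w, b)"
      by (rule exchange_vertex[of "s # F" x j b "[t]" w])
        (use F x True facts in \<open>auto dest!: path_arcs_memD\<close>)
    moreover have "c (x, j) + c (j, t) = c (x, w) + c (w, t)"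
      by (rule exchange_before_target) (use x True facts in auto)
    ultimately show ?thesis by linarith
  next
    case False
    have "c (s, j) + c (j, b) = c (s, w) + c (w, b)"
      by (rule exchange_after_source) (use False facts in auto)
    moreover have "c (j, t) - c (w, t) = c (s, w) - c (s, j)"
      by (rule target_diff_eq_source_diff) (use False facts in auto)
    ultimately show ?thesis by linarith
  qed
qed simp

lemma detour_weight_eq:
  assumes "j \<noteq> t" "w \<notin> {s, t, i, j}" "w' \<notin> {s, t, i, j}"
  shows "c (i, w) + c (w, t) = c (i, w') + c (w', t)"
proof (cases "w = w'")
  case False
  note facts = assms False s_ne_t four_le_p arc_ij_facts
  show ?thesis
  proof (cases "i = s")
    case True
    obtain b where b: "b \<notin> set [s, t, j, w, w']"
      by (rule fresh_vertex[of "[s, t, j, w, w']"]) (use four_le_p in simp)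
    obtain F where F: "length F = p - 3" "distinct F" "set F \<inter> set [s, t, w', b, w] = {}"
      by (rule fresh_vertices[of "[s, t, w', b, w]" "p - 3"]) (use four_le_p in simp)
    have "c (s, w') + c (w', b) = c (s, w) + c (w, b)"
      by (rule exchange_vertex[of "[]" s w' b "F @ [t]" w])
        (use F b True facts in \<open>auto dest!: path_arcs_memD\<close>)
    moreover have "c (j, b) - c (w, b) = c (j, t) - c (w, t)"
      by (rule successor_diff_eq_target_diff) (use b True facts in auto)
    moreover have "c (j, b) - c (w', b) = c (j, t) - c (w', t)"
      by (rule successor_diff_eq_target_diff) (use b True facts in auto)
    ultimately show ?thesis unfolding True by linarith
  next
    case i_ne_s: False
    obtain F where F: "length F = p - 3" "distinct F" "set F \<inter> set [s, t, i, w', w] = {}"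
      by (rule fresh_vertices[of "[s, t, i, w', w]" "p - 3"]) (use four_le_p in simp)
    have "c (i, w') + c (w', t) = c (i, w) + c (w, t)"
      by (rule exchange_vertex[of "s # F" i w' t "[]" w])
        (use F i_ne_s facts in \<open>auto dest!: path_arcs_memD\<close>)
    then show ?thesis by simp
  qed
qed simp

lemma using_path_weight:
  assumes "j \<noteq> t" "is_p_path s t p Q" "(i, j) \<in> path_arcs Q" "w \<notin> {s, t, i, j}"
  shows "path_weight c Q = d + c (i, j) + c (j, t) - c (i, w) - c (w, t)"
proof -
  have Q: "length Q = p + 1" "distinct Q" "hd Q = s" "last Q = t"
    using assms(2) s_ne_t four_le_p by (auto simp: is_p_path_iff)
  obtain xs ys where Q_eq: "Q = xs @ i # j # ys" using assms(3) by (rule path_arcs_memE)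
  obtain b zs where ys: "ys = b # zs" using Q(4) Q_eq assms(1) by (cases ys) auto
  obtain v where v: "v \<notin> set Q" by (rule fresh_vertex[of Q]) (use Q in simp)
  have "s \<in> set (xs @ [i])" using Q(3) Q_eq by (cases xs) auto
  moreover have "t \<in> set Q" using Q(4) Q_eq last_in_set[of Q] by blast
  ultimately have b: "b \<notin> {s, i, j, v}" and v': "v \<notin> {s, t, i, j}"
    using Q(2) Q_eq ys v by auto
  have "path_weight c Q = d + c (i, j) + c (j, b) - c (i, v) - c (v, b)"
    unfolding Q_eq ys
    by (rule weight_replace_vertex) (use Q Q_eq ys v in \<open>auto simp: hd_append dest!: path_arcs_memD\<close>)
  also have "\<dots> = d + c (i, j) + c (j, t) - c (i, v) - c (v, t)"
    using successor_diff_eq_target_diff[OF assms(1) _ b] v' by simp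
  also have "\<dots> = d + c (i, j) + c (j, t) - c (i, w) - c (w, t)"
    using detour_weight_eq[OF assms(1) v' assms(4)] by simp
  finally show ?thesis .
qed

lemma using_paths_same_weight_of_ne_target:
  assumes "j \<noteq> t" "is_p_path s t p Q" "(i, j) \<in> path_arcs Q"
    and "is_p_path s t p Q'" "(i, j) \<in> path_arcs Q'"
  shows "path_weight c Q = path_weight c Q'"
proof -
  obtain w where "w \<notin> set [s, t, i, j]" by (rule fresh_vertex[of "[s, t, i, j]"]) (use four_le_p in simp)
  then show ?thesis using using_path_weight assms by simp
qed

lemma reversed: "constant_on_avoiding_paths t s p j i (c \<circ> prod.swap) d"
proof
  show "t \<noteq> s" "4 \<le> p" "p + 2 \<le> CARD('v)" "(j, i) \<in> arcs t s"
    using s_ne_t four_le_p p_le_card arc_ij by (auto simp: arcs_swap_iff)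
  fix R assume "is_p_path t s p R" "(j, i) \<notin> path_arcs R"
  then have "is_p_path s t p (rev R)" "(i, j) \<notin> path_arcs (rev R)"
    using is_p_path_rev[OF s_ne_t, of p "rev R"] four_le_p by (auto simp: path_arcs_rev)
  then show "path_weight (c \<circ> prod.swap) R = d"
    using weight_avoiding path_weight_rev[of c "rev R"] by simp
qed

theorem using_paths_same_weight:
  assumes "is_p_path s t p Q" "(i, j) \<in> path_arcs Q" "is_p_path s t p Q'" "(i, j) \<in> path_arcs Q'"
  shows "path_weight c Q = path_weight c Q'"
proof (cases "j = t")
  case False
  then show ?thesis using assms by (rule using_paths_same_weight_of_ne_target)
next
  case True
  then have "i \<noteq> s" using arc_ij_facts by blast
  interpret rev: constant_on_avoiding_paths t s p j i "c \<circ> prod.swap" d by (rule reversed)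
  have "path_weight (c \<circ> prod.swap) (rev Q) = path_weight (c \<circ> prod.swap) (rev Q')"
    by (rule rev.using_paths_same_weight_of_ne_target)
      (use assms \<open>i \<noteq> s\<close> s_ne_t four_le_p in \<open>auto simp: is_p_path_rev path_arcs_rev\<close>)
  then show ?thesis by (simp add: path_weight_rev)
qed

end

lemma using_path_exists:
  fixes s t :: "'v::finite"
  assumes "s \<noteq> t" "4 \<le> p" "p + 2 \<le> CARD('v)" "(i, j) \<in> arcs s t"
  obtains Q where "is_p_path s t p Q" "(i, j) \<in> path_arcs Q"
proof -
  have ij: "i \<noteq> j" "j \<noteq> s" "i \<noteq> t" "(i, j) \<noteq> (s, t)" using assms(4) by (auto simp: arcs_def)
  obtain G where G: "length G = p - 2" "distinct G" "set G \<inter> set [s, t, i, j] = {}"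
    by (rule obtain_fresh_list[of "[s, t, i, j]" "p - 2"]) (use assms(2,3) in simp)
  then obtain x F where "G = x # F" using assms(2) by (cases G) auto
  with G have F: "length F = p - 3" "distinct (x # F)" "set (x # F) \<inter> set [s, t, i, j] = {}"
    by auto
  consider "i = s" | "j = t" | "i \<noteq> s" "j \<noteq> t" by blast
  then show ?thesis
  proof cases
    case 1
    then show ?thesis using that[of "s # j # x # F @ [t]"] F ij assms(1,2) by (auto simp: is_p_path_iff)
  next
    case 2
    then show ?thesis using that[of "s # x # F @ [i, t]"] F ij assms(1,2) by (auto simp: is_p_path_iff)
  next
    case 3
    then show ?thesis using that[of "s # i # j # F @ [t]"] F ij assms(1,2) by (auto simp: is_p_path_iff)
  qed
qed

lemma incidence_using_path_in_affine_hull: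
  fixes s t :: "'v::finite"
  assumes "s \<noteq> t" "4 \<le> p" "p + 2 \<le> CARD('v)" "(i, j) \<in> arcs s t"
    and "is_p_path s t p Q" "(i, j) \<in> path_arcs Q" "is_p_path s t p Q0" "(i, j) \<in> path_arcs Q0"
  shows "incidence Q \<in> affine hull
    (insert (incidence Q0) (incidence ` {R. is_p_path s t p R \<and> (i, j) \<notin> path_arcs R}))"
proof (rule mem_affine_hull_if_hyperplanes)
  fix a b
  assume hyperplane: "insert (incidence Q0)
    (incidence ` {R. is_p_path s t p R \<and> (i, j) \<notin> path_arcs R}) \<subseteq> {x. a \<bullet> x = b}"
  have weight: "a \<bullet> incidence R = path_weight (($) a) R" if "is_p_path s t p R" for R
    using that by (simp add: inner_incidence is_p_path_def)
  interpret constant_on_avoiding_paths s t p i j "($) a" b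
    using assms(1-4) hyperplane weight by unfold_locales auto
  have "path_weight (($) a) Q = path_weight (($) a) Q0"
    using assms(5-8) by (rule using_paths_same_weight)
  then show "a \<bullet> incidence Q = b" using hyperplane weight assms(5,7) by auto
qed

lemma path_polytope_subset_affine_hull:
  fixes s t :: "'v::finite"
  assumes "s \<noteq> t" "4 \<le> p" "p + 2 \<le> CARD('v)" "(i, j) \<in> arcs s t"
    and Q0: "is_p_path s t p Q0" "(i, j) \<in> path_arcs Q0"
  shows "path_polytope s t p \<subseteq> affine hull
    (insert (incidence Q0) (incidence ` {R. is_p_path s t p R \<and> (i, j) \<notin> path_arcs R}))"
  unfolding path_polytope_def
proof (rule hull_minimal)
  show "incidence ` {R. is_p_path s t p R} \<subseteq> affine hull
    (insert (incidence Q0) (incidence ` {R. is_p_path s t p R \<and> (i, j) \<notin> path_arcs R}))"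
  proof clarify
    fix R assume R: "is_p_path s t p R"
    show "incidence R \<in> affine hull
      (insert (incidence Q0) (incidence ` {R. is_p_path s t p R \<and> (i, j) \<notin> path_arcs R}))"
    proof (cases "(i, j) \<in> path_arcs R")
      case True
      then show ?thesis by (rule incidence_using_path_in_affine_hull[OF assms(1-4) R _ Q0])
    next
      case False
      then show ?thesis using R by (simp add: hull_inc)
    qed
  qed
qed (simp add: affine_imp_convex)

theorem theorem10:
  fixes s t :: "'v::finite" and p :: nat and i j :: 'v
  assumes "s \<noteq> t"
    and "4 \<le> p" and "p \<le> CARD('v) - 2"
    and "(i, j) \<in> arcs s t"
  shows "(\<forall>x \<in> path_polytope s t p. x $ (i, j) \<ge> 0)
    \<and> aff_dim {x \<in> path_polytope s t p. x $ (i, j) = 0} = aff_dim (path_polytope s t p) - 1"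
proof -
  let ?P = "path_polytope s t p" and ?H = "{x. x $ (i, j) = 0}"
  let ?X = "incidence ` {R. is_p_path s t p R \<and> (i, j) \<notin> path_arcs R}"
  have card: "p + 2 \<le> CARD('v)" using assms(2,3) by linarith
  obtain Q0 where Q0: "is_p_path s t p Q0" "(i, j) \<in> path_arcs Q0"
    using using_path_exists[OF assms(1,2) card assms(4)] by blast
  have "affine ?H" by (simp add: affine_def algebra_simps)
  moreover have "?X \<subseteq> ?P \<inter> ?H"
    by (auto simp: path_polytope_def hull_inc incidence_nth)
  moreover have "incidence Q0 \<in> ?P" "incidence Q0 \<notin> ?H"
    using Q0 by (auto simp: path_polytope_def hull_inc incidence_nth)
  moreover have "?P \<subseteq> affine hull (insert (incidence Q0) ?X)"
    using path_polytope_subset_affine_hull[OF assms(1,2) card assms(4) Q0] .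
  ultimately have "aff_dim (?P \<inter> ?H) = aff_dim ?P - 1"
    by (rule aff_dim_Int_affine_eq_minus_one)
  moreover have "{x \<in> ?P. x $ (i, j) = 0} = ?P \<inter> ?H" by blast
  ultimately show ?thesis using path_polytope_nonneg by auto
qed

end
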